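(* For $m\ge 1$, let $\mathbf{D}_m$ be the $m\times m$ symmetric tridiagonal matrix with diagonal entries $d_{kk}=4k^2-6k+\tfrac52$ ($1\le k\le m$), off-diagonal entries $d_{k,k+1}=d_{k+1,k}=-k(2k-1)$ ($1\le k\le m-1$), and all other entries zero. Then for every $m\in\mathbb{N}$ its smallest eigenvalue satisfies $$\lambda_{\min}(\mathbf{D}_m)>\frac{4}{\ln^2 m+8\ln m+8}.$$ *)

theory Defs
  imports Complex_Main "Jordan_Normal_Form.Char_Poly"
begin

text \<open>The m x m symmetric tridiagonal matrix D_m. Matrix indices are 0-based,
  so the paper's row index k corresponds to i + 1.\<close>
definition Dmat :: "nat \<Rightarrow> real mat" where
  "Dmat m = mat m m (\<lambda>(i, j).
     if i = j then 4 * real (i+1)^2 - 6 * real (i+1) + 5/2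
     else if j = i + 1 then - (real (i+1) * (2 * real (i+1) - 1))
     else if i = j + 1 then - (real (j+1) * (2 * real (j+1) - 1))
     else 0)"

definition lambda_min :: "real mat \<Rightarrow> real" where
  "lambda_min A = Min {x. eigenvalue A x}"

end

theory Submission
  imports Defs
begin

text \<open>Let v k = binom(2k, k) / 4^k (0-based; wallis_ratio below), the ground state of
  the infinite matrix D: every row of D annihilates v. Substituting x k = v k * y k turns the
  quadratic form of D_m into the weighted Dirichlet sum sum_{k<m} a k * (y k - y (k+1))^2 with
  y m = 0 and a k = (2k+1)^2 * (v k)^2 / 2 (edge_weight). Writing y i as the telescoping sum of
  these differences, Cauchy-Schwarz gives the discrete Hardy inequality
  |x|^2 <= (sum_{j<m} T j) * x^T D_m x with T j = (sum_{i<=j} (v i)^2) / a j (hardy_coeff).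
  The T j obey T (j+1) = (4(j+1)^2 T j + 2) / (2j+3)^2, which yields
  T j <= (ln (j+1) + 23/6) / (2(j+1)) for j >= 2 by induction; summing against the increments
  of (ln^2 t + 8 ln t + 8) / 4 gives sum_{j<m} T j < (ln^2 m + 8 ln m + 8) / 4. Since D_m is
  real symmetric, its eigenvalues are real and bounded below by the Rayleigh quotient, hence
  by 1 / (sum_{j<m} T j).\<close>

section \<open>Eigenvalues of real symmetric matrices\<close>

lemma finite_eigenvalues:
  fixes A :: "'a :: field mat"
  assumes "A \<in> carrier_mat n n"
  shows "finite {x. eigenvalue A x}"
proof -
  have "char_poly A \<noteq> 0"
    using degree_monic_char_poly[OF assms] by auto
  then have "finite {x. poly (char_poly A) x = 0}"
    by (rule poly_roots_finite)
  then show ?thesis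
    using eigenvalue_root_char_poly[OF assms] by simp
qed

lemma eigenvalue_of_real_symmetric_in_Reals:
  fixes A :: "real mat"
  assumes A: "A \<in> carrier_mat n n" and sym: "transpose_mat A = A"
    and ev: "eigenvalue (map_mat complex_of_real A) c"
  shows "c \<in> \<real>"
proof -
  let ?B = "map_mat complex_of_real A"
  have B: "?B \<in> carrier_mat n n" using A by simp
  obtain z where z: "z \<in> carrier_vec n" "z \<noteq> 0\<^sub>v n" "?B *\<^sub>v z = c \<cdot>\<^sub>v z"
    using ev B unfolding eigenvalue_def eigenvector_def by auto
  have real_entries: "conjugate (?B *\<^sub>v z) = ?B *\<^sub>v conjugate z"
    using A z(1) by (intro eq_vecI) (auto simp: scalar_prod_def)
  have B_sym: "transpose_mat ?B = ?B"
    using sym by (simp add: map_mat_transpose)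
  have "c * (z \<bullet>c z) = (?B *\<^sub>v z) \<bullet>c z"
    using z by simp
  also have "\<dots> = (transpose_mat ?B *\<^sub>v z) \<bullet> conjugate z"
    using B_sym by simp
  also have "\<dots> = z \<bullet> (?B *\<^sub>v conjugate z)"
    using B z(1) by (intro transpose_vec_mult_scalar) auto
  also have "\<dots> = cnj c * (z \<bullet>c z)"
    using z by (simp add: real_entries[symmetric] conjugate_smult_vec)
  finally have "c = cnj c"
    using z(1,2) by simp
  then show ?thesis
    using Reals_cnj_iff by metis
qed

lemma real_symmetric_has_eigenvalue:
  fixes A :: "real mat"
  assumes A: "A \<in> carrier_mat n n" and sym: "transpose_mat A = A" and "n > 0"
  shows "\<exists>l. eigenvalue A l"
proof -
  let ?B = "map_mat complex_of_real A"
  have B: "?B \<in> carrier_mat n n" using A by simp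
  have char_poly_B: "char_poly ?B = map_poly complex_of_real (char_poly A)"
    by (rule of_real_hom.char_poly_hom[OF A])
  have "degree (char_poly ?B) = n"
    using degree_monic_char_poly[OF B] by simp
  then have "\<not> constant (poly (char_poly ?B))"
    using \<open>n > 0\<close> by (simp add: constant_degree)
  then obtain c where "poly (char_poly ?B) c = 0"
    using fundamental_theorem_of_algebra by blast
  then have "eigenvalue ?B c"
    using eigenvalue_root_char_poly[OF B] by simp
  then have "c \<in> \<real>"
    by (rule eigenvalue_of_real_symmetric_in_Reals[OF A sym])
  then obtain l where l: "c = complex_of_real l"
    by (auto elim: Reals_cases)
  have "complex_of_real (poly (char_poly A) l) = 0"
    using \<open>poly (char_poly ?B) c = 0\<close> unfolding l char_poly_B of_real_hom.poly_map_poly .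
  then show ?thesis
    using eigenvalue_root_char_poly[OF A] by auto
qed

lemma lambda_min_ge_Rayleigh:
  assumes A: "A \<in> carrier_mat n n" "transpose_mat A = A" "n > 0"
    and Rayleigh: "\<And>x. x \<in> carrier_vec n \<Longrightarrow> c * (x \<bullet> x) \<le> x \<bullet> (A *\<^sub>v x)"
  shows "c \<le> lambda_min A"
proof -
  have bound: "c \<le> l" if ev: "eigenvalue A l" for l
  proof -
    obtain u where u: "u \<in> carrier_vec n" "u \<noteq> 0\<^sub>v n" "A *\<^sub>v u = l \<cdot>\<^sub>v u"
      using ev A(1) unfolding eigenvalue_def eigenvector_def by auto
    have "c * (u \<bullet> u) \<le> l * (u \<bullet> u)"
      using Rayleigh[OF u(1)] u by simp
    moreover have "u \<bullet> u > 0"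
      using conjugate_square_greater_0_vec[OF u(1)] u(2) by simp
    ultimately show ?thesis
      by simp
  qed
  have "finite {x. eigenvalue A x}" "{x. eigenvalue A x} \<noteq> {}"
    using finite_eigenvalues[OF A(1)] real_symmetric_has_eigenvalue[OF A] by auto
  then show ?thesis
    unfolding lambda_min_def using Min_in bound by blast
qed

section \<open>Tridiagonal quadratic forms and a discrete Hardy inequality\<close>

definition sym_tridiag_mat :: "nat \<Rightarrow> (nat \<Rightarrow> 'a) \<Rightarrow> (nat \<Rightarrow> 'a) \<Rightarrow> 'a :: zero mat"
  where
  "sym_tridiag_mat n d e = mat n n (\<lambda>(i, j).
     if i = j then d i else if j = i + 1 then e i else if i = j + 1 then e j else 0)"

lemma sym_tridiag_mat_carrier [simp]: "sym_tridiag_mat n d e \<in> carrier_mat n n"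
  by (simp add: sym_tridiag_mat_def)

lemma transpose_sym_tridiag_mat: "transpose_mat (sym_tridiag_mat n d e) = sym_tridiag_mat n d e"
  by (rule eq_matI) (auto simp: sym_tridiag_mat_def)

lemma quadratic_form_sym_tridiag_mat:
  fixes d e :: "nat \<Rightarrow> 'a :: comm_ring_1"
  assumes x: "x \<in> carrier_vec (Suc n)"
  shows "x \<bullet> (sym_tridiag_mat (Suc n) d e *\<^sub>v x)
    = (\<Sum>i\<le>n. d i * (x $ i)^2) + 2 * (\<Sum>i<n. e i * x $ i * x $ Suc i)"
proof -
  define N where "N = Suc n"
  define T where "T = sym_tridiag_mat N d e"
  have dims: "dim_row T = N" "dim_col T = N" "dim_vec x = N"
    using x by (simp_all add: T_def N_def sym_tridiag_mat_def)
  define U where "U = (\<Sum>i<n. e i * x $ i * x $ Suc i)"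
  have entry: "T $$ (i, j) * x $ i * x $ j
      = (if j = i then d i * x $ i * x $ j else 0)
      + (if j = Suc i then e i * x $ i * x $ j else 0)
      + (if i = Suc j then e j * x $ j * x $ i else 0)" if "i < N" "j < N" for i j
    using that by (auto simp: T_def sym_tridiag_mat_def)
  have upper: "(\<Sum>i<N. \<Sum>j<N. if j = Suc i then e i * x $ i * x $ j else 0) = U"
    by (simp only: sum.delta finite_lessThan) (auto simp: N_def U_def intro!: sum.cong)
  have row: "(T *\<^sub>v x) $ i = (\<Sum>j<N. T $$ (i, j) * x $ j)" if "i < N" for i
    using that dims by (simp add: scalar_prod_def lessThan_atLeast0)
  have "x \<bullet> (T *\<^sub>v x) = (\<Sum>i<N. x $ i * (T *\<^sub>v x) $ i)"
    using dims by (simp add: scalar_prod_def lessThan_atLeast0)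
  also have "\<dots> = (\<Sum>i<N. \<Sum>j<N. T $$ (i, j) * x $ i * x $ j)"
    by (intro sum.cong refl) (simp add: row sum_distrib_left mult_ac)
  also have "\<dots> = (\<Sum>i<N. \<Sum>j<N. (if j = i then d i * x $ i * x $ j else 0)
      + (if j = Suc i then e i * x $ i * x $ j else 0)
      + (if i = Suc j then e j * x $ j * x $ i else 0))"
    by (intro sum.cong refl) (simp add: entry)
  also have "\<dots> = (\<Sum>i<N. \<Sum>j<N. if j = i then d i * x $ i * x $ j else 0)
      + (\<Sum>i<N. \<Sum>j<N. if j = Suc i then e i * x $ i * x $ j else 0)
      + (\<Sum>i<N. \<Sum>j<N. if i = Suc j then e j * x $ j * x $ i else 0)"
    by (simp only: sum.distrib)
  also have "(\<Sum>i<N. \<Sum>j<N. if i = Suc j then e j * x $ j * x $ i else 0) = U"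
    using upper by (subst sum.swap) simp
  also have "(\<Sum>i<N. \<Sum>j<N. if j = i then d i * x $ i * x $ j else 0)
      = (\<Sum>i\<le>n. d i * (x $ i)^2)"
    by (simp add: N_def lessThan_Suc_atMost) (simp add: power2_eq_square mult.assoc)
  also note upper
  also have "(\<Sum>i\<le>n. d i * (x $ i)^2) + U + U = (\<Sum>i\<le>n. d i * (x $ i)^2) + 2 * U"
    by (simp only: mult_2 add.assoc)
  finally show ?thesis
    unfolding T_def N_def U_def .
qed

lemma ground_state_identity:
  fixes d e v a y :: "nat \<Rightarrow> 'a :: comm_ring_1"
  assumes off: "\<And>i. e i * v i * v (Suc i) = - a i"
    and diag0: "d 0 * (v 0)^2 = a 0"
    and diag: "\<And>i. d (Suc i) * (v (Suc i))^2 = a i + a (Suc i)"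
  shows "(\<Sum>i\<le>n. d i * (v i * y i)^2)
      + 2 * (\<Sum>i<n. e i * (v i * y i) * (v (Suc i) * y (Suc i)))
    = (\<Sum>i<n. a i * (y i - y (Suc i))^2) + a n * (y n)^2"
proof -
  define f where "f i = d i * (v i * y i)^2" for i
  define g where "g i = e i * (v i * y i) * (v (Suc i) * y (Suc i))" for i
  define h where "h i = a i * (y i - y (Suc i))^2" for i
  have "(\<Sum>i\<le>n. f i) + 2 * (\<Sum>i<n. g i) = (\<Sum>i<n. h i) + a n * (y n)^2"
  proof (induction n)
    case 0
    show ?case
      by (simp add: f_def power_mult_distrib mult.assoc flip: diag0)
  next
    case (Suc n)
    have "f (Suc n) = (a n + a (Suc n)) * (y (Suc n))^2"
      by (simp add: f_def power_mult_distrib mult.assoc flip: diag)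
    moreover have "g n = - a n * y n * y (Suc n)"
    proof -
      have "g n = (e n * v n * v (Suc n)) * (y n * y (Suc n))"
        by (simp add: g_def mult_ac)
      then show ?thesis
        by (simp add: off)
    qed
    ultimately show ?case
      using Suc.IH by (simp add: h_def power2_eq_square algebra_simps)
  qed
  then show ?thesis
    by (simp add: f_def g_def h_def)
qed

lemma weighted_Cauchy_Schwarz:
  fixes z a :: "'b \<Rightarrow> 'a :: linordered_field"
  assumes "finite A" and pos: "\<And>j. j \<in> A \<Longrightarrow> a j > 0"
  shows "(\<Sum>j\<in>A. z j)^2 \<le> (\<Sum>j\<in>A. 1 / a j) * (\<Sum>j\<in>A. a j * (z j)^2)"
proof (cases "A = {}")
  case False
  define R where "R = (\<Sum>j\<in>A. 1 / a j)"
  define Z where "Z = (\<Sum>j\<in>A. z j)"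
  define E where "E = (\<Sum>j\<in>A. a j * (z j)^2)"
  have "R > 0"
    unfolding R_def using assms False by (intro sum_pos) auto
  define t where "t = Z / R"
  have square: "a j * (z j - t / a j)^2 = a j * (z j)^2 - 2 * t * z j + t^2 * (1 / a j)"
    if "j \<in> A" for j
    using pos[OF that] by (simp add: field_simps power2_eq_square)
  have "0 \<le> (\<Sum>j\<in>A. a j * (z j - t / a j)^2)"
    using pos by (intro sum_nonneg) (simp add: less_imp_le)
  also have "\<dots> = E - 2 * t * Z + t^2 * R"
    by (simp add: square E_def Z_def R_def sum_subtractf sum.distrib sum_distrib_left cong: sum.cong)
  also have "\<dots> = E - Z^2 / R"
    using \<open>R > 0\<close> by (simp add: t_def field_simps power2_eq_square)
  finally show ?thesis
    using \<open>R > 0\<close> by (simp add: R_def Z_def E_def field_simps)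
qed simp

lemma discrete_Hardy_inequality:
  fixes v a y :: "nat \<Rightarrow> real"
  assumes pos: "\<And>j. a j > 0" and "y m = 0"
  shows "(\<Sum>i<m. (v i * y i)^2)
    \<le> (\<Sum>j<m. (\<Sum>i\<le>j. (v i)^2) / a j) * (\<Sum>j<m. a j * (y j - y (Suc j))^2)"
proof -
  define E where "E = (\<Sum>j<m. a j * (y j - y (Suc j))^2)"
  have "(y i)^2 \<le> (\<Sum>j=i..<m. 1 / a j) * E" if "i < m" for i
  proof -
    have "y i = (\<Sum>j=i..<m. y j - y (Suc j))"
      using sum_Suc_diff'[of i m y] that \<open>y m = 0\<close> by (simp add: sum_subtractf)
    then have "(y i)^2 \<le> (\<Sum>j=i..<m. 1 / a j) * (\<Sum>j=i..<m. a j * (y j - y (Suc j))^2)"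
      using weighted_Cauchy_Schwarz[of "{i..<m}" a "\<lambda>j. y j - y (Suc j)"] pos by simp
    also have "\<dots> \<le> (\<Sum>j=i..<m. 1 / a j) * E"
      unfolding E_def using pos
      by (intro mult_left_mono sum_mono2 sum_nonneg) (auto simp: less_imp_le)
    finally show ?thesis .
  qed
  then have "(\<Sum>i<m. (v i * y i)^2) \<le> (\<Sum>i<m. (v i)^2 * (\<Sum>j=i..<m. 1 / a j) * E)"
    by (intro sum_mono) (simp add: power_mult_distrib mult.assoc mult_left_mono)
  also have "\<dots> = (\<Sum>i<m. \<Sum>j\<in>{j\<in>{..<m}. i \<le> j}. (v i)^2 * (1 / a j)) * E"
  proof -
    have "{i..<m} = {j\<in>{..<m}. i \<le> j}" for i
      by auto
    then show ?thesis
      by (simp only: sum_distrib_left sum_distrib_right)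
  qed
  also have "\<dots> = (\<Sum>j<m. \<Sum>i\<in>{i\<in>{..<m}. i \<le> j}. (v i)^2 * (1 / a j)) * E"
    by (subst sum.swap_restrict) simp_all
  also have "\<dots> = (\<Sum>j<m. (\<Sum>i\<le>j. (v i)^2) / a j) * E"
  proof -
    have "{i\<in>{..<m}. i \<le> j} = {..j}" if "j < m" for j
      using that by auto
    then show ?thesis
      by (simp add: sum_divide_distrib)
  qed
  finally show ?thesis
    unfolding E_def .
qed

section \<open>Logarithmic estimates\<close>

lemma ln_add_one_diff_bounds:
  fixes x :: real
  assumes "x > 0"
  shows "1 / (x + 1) \<le> ln (x + 1) - ln x" and "ln (x + 1) - ln x \<le> 1 / x"
proof -
  have "ln (x / (x + 1)) \<le> x / (x + 1) - 1"
    using assms by (intro ln_le_minus_one) simp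
  then show "1 / (x + 1) \<le> ln (x + 1) - ln x"
    using assms by (simp add: ln_div field_simps)
  have "ln (1 + 1 / x) \<le> 1 / x"
    using assms by (intro ln_add_one_self_le_self) simp
  then show "ln (x + 1) - ln x \<le> 1 / x"
    using assms by (simp add: ln_div field_simps)
qed

lemma ln_3_ge_1: "ln (3::real) \<ge> 1"
  using exp_le by (simp add: ln_ge_iff)

lemma ln_2_ge_7_12: "ln (2::real) \<ge> 7/12"
proof -
  have "1/3 \<le> ln 3 - ln (2::real)" "1/4 \<le> ln 4 - ln (3::real)"
    using ln_add_one_diff_bounds(1)[of 2] ln_add_one_diff_bounds(1)[of 3] by simp_all
  moreover have "ln (4::real) = 2 * ln 2"
    using ln_realpow[of 2 2] by simp
  ultimately show ?thesis
    by simp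
qed

lemma log_quadratic_increment:
  fixes x :: real
  assumes "x \<ge> 2"
  shows "(ln (x + 1) + 23/6) / (2 * (x + 1))
    \<le> ((ln (x + 1))^2 + 8 * ln (x + 1) + 8) / 4 - ((ln x)^2 + 8 * ln x + 8) / 4"
proof -
  define k where "k = x + 1"
  define L where "L = ln k"
  define \<delta> where "\<delta> = ln k - ln x"
  define C where "C = 2 * L + 8"
  have "k \<ge> 3" "L \<ge> 0"
    using assms by (simp_all add: k_def L_def)
  have "k * \<delta> \<ge> 1"
    using ln_add_one_diff_bounds(1)[of x] assms by (simp add: k_def \<delta>_def field_simps)
  have "\<delta> \<le> 1 / x"
    using ln_add_one_diff_bounds(2)[of x] assms by (simp add: k_def \<delta>_def)
  also have "1 / x \<le> 1 / 2"
    using assms by (simp add: field_simps)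
  finally have "\<delta> \<le> 1 / 2" .
  have "1 / k \<le> 1 / 3"
    using \<open>k \<ge> 3\<close> by (simp add: field_simps)
  \<comment> \<open>\<open>\<delta> (C - \<delta>)\<close> increases on \<open>[1/k, C/2]\<close>, and \<open>\<delta> \<ge> 1/k\<close>\<close>
  have "k * \<delta> * (C - \<delta>) - (C - 1 / k) = (k * \<delta> - 1) * (C - \<delta> - 1 / k)"
    using \<open>k \<ge> 3\<close> by (simp add: field_simps)
  moreover have "(k * \<delta> - 1) * (C - \<delta> - 1 / k) \<ge> 0"
    using \<open>k * \<delta> \<ge> 1\<close> \<open>\<delta> \<le> 1 / 2\<close> \<open>1 / k \<le> 1 / 3\<close> \<open>L \<ge> 0\<close>
    by (intro mult_nonneg_nonneg) (simp_all add: C_def)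
  ultimately have "2 * (L + 23/6) \<le> k * \<delta> * (C - \<delta>)"
    using \<open>1 / k \<le> 1 / 3\<close> by (simp add: C_def)
  have "(L + 23/6) / (2 * k) = 2 * (L + 23/6) / (4 * k)"
    using \<open>k \<ge> 3\<close> by (simp add: field_simps)
  also have "\<dots> \<le> k * \<delta> * (C - \<delta>) / (4 * k)"
    using \<open>2 * (L + 23/6) \<le> k * \<delta> * (C - \<delta>)\<close> \<open>k \<ge> 3\<close> by (intro divide_right_mono) auto
  also have "\<dots> = \<delta> * (C - \<delta>) / 4"
    using \<open>k \<ge> 3\<close> by simp
  also have "\<dots> = (L^2 + 8 * L + 8) / 4 - ((L - \<delta>)^2 + 8 * (L - \<delta>) + 8) / 4"
    by (simp add: C_def power2_eq_square field_simps)
  finally show ?thesis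
    by (simp add: k_def L_def \<delta>_def add.commute)
qed

section \<open>The ground state of D\<close>

definition Dmat_diag :: "nat \<Rightarrow> real" where
  "Dmat_diag i = 4 * real (i+1)^2 - 6 * real (i+1) + 5/2"

definition Dmat_offdiag :: "nat \<Rightarrow> real" where
  "Dmat_offdiag i = - (real (i+1) * (2 * real (i+1) - 1))"

lemma Dmat_eq_sym_tridiag_mat: "Dmat m = sym_tridiag_mat m Dmat_diag Dmat_offdiag"
  unfolding Dmat_def sym_tridiag_mat_def Dmat_diag_def Dmat_offdiag_def ..

fun wallis_ratio :: "nat \<Rightarrow> real" where
  "wallis_ratio 0 = 1"
| "wallis_ratio (Suc i) = wallis_ratio i * (2 * real i + 1) / (2 * real i + 2)"

lemma wallis_ratio_pos: "wallis_ratio i > 0"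
  by (induction i) auto

definition edge_weight :: "nat \<Rightarrow> real" where
  "edge_weight i = (2 * real i + 1)^2 * (wallis_ratio i)^2 / 2"

lemma edge_weight_pos: "edge_weight i > 0"
  using wallis_ratio_pos[of i] by (simp add: edge_weight_def)

lemma edge_weight_eq_Suc: "edge_weight i = (2 * real i + 2)^2 * (wallis_ratio (Suc i))^2 / 2"
proof -
  have "2 * real i + 2 > 0" by simp
  then show ?thesis
    by (simp add: edge_weight_def power_mult_distrib power_divide)
qed

lemma Dmat_offdiag_wallis_ratio:
  "Dmat_offdiag i * wallis_ratio i * wallis_ratio (Suc i) = - edge_weight i"
proof -
  have "2 * real i + 2 > 0" by simp
  then show ?thesis
    by (simp add: Dmat_offdiag_def edge_weight_def field_simps power2_eq_square)
qed

lemma Dmat_diag_wallis_ratio_0: "Dmat_diag 0 * (wallis_ratio 0)^2 = edge_weight 0"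
  by (simp add: Dmat_diag_def edge_weight_def)

lemma Dmat_diag_wallis_ratio_Suc:
  "Dmat_diag (Suc i) * (wallis_ratio (Suc i))^2 = edge_weight i + edge_weight (Suc i)"
  by (simp only: edge_weight_eq_Suc[of i] edge_weight_def[of "Suc i"])
    (simp add: Dmat_diag_def power2_eq_square field_simps del: wallis_ratio.simps)

definition hardy_coeff :: "nat \<Rightarrow> real" where
  "hardy_coeff j = (\<Sum>i\<le>j. (wallis_ratio i)^2) / edge_weight j"

lemma hardy_coeff_pos: "hardy_coeff j > 0"
proof -
  have "(wallis_ratio i)^2 > 0" for i
    using wallis_ratio_pos[of i] by simp
  then show ?thesis
    unfolding hardy_coeff_def using edge_weight_pos by (intro divide_pos_pos sum_pos) auto
qed

lemma hardy_coeff_0: "hardy_coeff 0 = 2"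
  by (simp add: hardy_coeff_def edge_weight_def)

lemma hardy_coeff_Suc:
  "hardy_coeff (Suc j) = (hardy_coeff j * (2 * real (Suc j))^2 + 2) / (2 * real (Suc j) + 1)^2"
proof -
  have "wallis_ratio (Suc j) > 0" "2 * real j + 2 > 0"
    using wallis_ratio_pos by simp_all
  then show ?thesis
    unfolding hardy_coeff_def edge_weight_eq_Suc[of j] edge_weight_def[of "Suc j"]
    by (simp add: field_simps del: wallis_ratio.simps)
qed

lemma hardy_coeff_bound_step:
  fixes k :: real
  assumes "k \<ge> 3"
  shows "(2 * k * (ln k + 23/6) + 2) / (2 * k + 1)^2 \<le> (ln (k + 1) + 23/6) / (2 * (k + 1))"
proof -
  define L where "L = ln k + 23/6"
  define \<delta> where "\<delta> = ln (k + 1) - ln k"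
  have "ln k \<ge> 1"
    using ln_3_ge_1 ln_mono[of 3 k] assms by linarith
  then have "L \<ge> 4"
    unfolding L_def by linarith
  have "(k + 1) * \<delta> \<ge> 1"
    using ln_add_one_diff_bounds(1)[of k] assms by (simp add: \<delta>_def field_simps)
  \<comment> \<open>since \<open>(2k + 1)\<^sup>2 \<ge> 4k(k + 1)\<close>\<close>
  have "\<delta> * (2 * k + 1)^2 \<ge> 4 * k"
  proof -
    have "\<delta> \<ge> 0"
      using assms by (simp add: \<delta>_def)
    have "4 * k \<le> 4 * k * ((k + 1) * \<delta>)"
      using \<open>(k + 1) * \<delta> \<ge> 1\<close> assms by simp
    also have "\<dots> \<le> \<delta> * (2 * k + 1)^2"
      using \<open>\<delta> \<ge> 0\<close> by (simp add: power2_eq_square algebra_simps)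
    finally show ?thesis .
  qed
  have "(L + \<delta>) * (2 * k + 1)^2 - (2 * k * L + 2) * (2 * (k + 1))
      = L + \<delta> * (2 * k + 1)^2 - 4 * k - 4"
    by (simp add: power2_eq_square algebra_simps)
  then have "(2 * k * L + 2) * (2 * (k + 1)) \<le> (L + \<delta>) * (2 * k + 1)^2"
    using \<open>L \<ge> 4\<close> \<open>\<delta> * (2 * k + 1)^2 \<ge> 4 * k\<close> by linarith
  also have "L + \<delta> = ln (k + 1) + 23/6"
    by (simp add: L_def \<delta>_def)
  finally show ?thesis
    using assms by (simp add: L_def divide_simps) (simp add: algebra_simps power2_eq_square)
qed

lemma hardy_coeff_le:
  assumes "j \<ge> 2"
  shows "hardy_coeff j \<le> (ln (real j + 1) + 23/6) / (2 * (real j + 1))"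
  \<comment> \<open>false for j = 0; at j = 2 it only needs ln 3 \<open>\<ge>\<close> 1\<close>
  using assms
proof (induction j rule: dec_induct)
  case base
  have "hardy_coeff 2 = 178/225"
    by (simp add: numeral_2_eq_2 hardy_coeff_0 hardy_coeff_Suc)
  then show ?case
    using ln_3_ge_1 by simp
next
  case (step j)
  define k where "k = real j + 1"
  have "real (Suc j) = k" "k > 0"
    by (simp_all add: k_def)
  have "hardy_coeff (Suc j) = (hardy_coeff j * (2 * k)^2 + 2) / (2 * k + 1)^2"
    unfolding hardy_coeff_Suc \<open>real (Suc j) = k\<close> ..
  also have "\<dots> \<le> ((ln k + 23/6) / (2 * k) * (2 * k)^2 + 2) / (2 * k + 1)^2"
    using step.IH by (intro divide_right_mono add_right_mono mult_right_mono) (simp_all add: k_def)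
  also have "\<dots> = (2 * k * (ln k + 23/6) + 2) / (2 * k + 1)^2"
    using \<open>k > 0\<close> by (simp add: power2_eq_square)
  also have "\<dots> \<le> (ln (k + 1) + 23/6) / (2 * (k + 1))"
    using step.hyps by (intro hardy_coeff_bound_step) (simp add: k_def)
  finally show ?case
    by (simp add: k_def add.commute)
qed

lemma sum_hardy_coeff_less:
  assumes "m \<ge> 2"
  shows "(\<Sum>j<m. hardy_coeff j) < ((ln (real m))^2 + 8 * ln (real m) + 8) / 4"
proof -
  define F where "F t = ((ln t)^2 + 8 * ln t + 8) / 4" for t :: real
  have "(\<Sum>j<m. hardy_coeff j) < F (real m)"
    using assms
  proof (induction m rule: dec_induct)
    case base
    have "(\<Sum>j<2. hardy_coeff j) = 28/9"
      by (simp add: numeral_2_eq_2 hardy_coeff_0 hardy_coeff_Suc)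
    also have "28/9 < F 2"
      using ln_2_ge_7_12 unfolding F_def
      by (simp add: field_simps) (use zero_le_power2[of "ln (2::real)"] in linarith)
    finally show ?case
      by simp
  next
    case (step m)
    have "hardy_coeff m \<le> F (real m + 1) - F (real m)"
      using hardy_coeff_le[OF step.hyps(1)] log_quadratic_increment[of "real m"] step.hyps(1)
      unfolding F_def by simp
    moreover have "real (Suc m) = real m + 1"
      by simp
    ultimately show ?case
      using step.IH by (simp only: sum.lessThan_Suc)
  qed
  then show ?thesis
    by (simp add: F_def)
qed

lemma Dmat_Rayleigh_bound:
  assumes x: "x \<in> carrier_vec m" and "m > 0"
  shows "x \<bullet> x \<le> (\<Sum>j<m. hardy_coeff j) * (x \<bullet> (Dmat m *\<^sub>v x))"
proof -
  obtain n where m: "m = Suc n"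
    using \<open>m > 0\<close> gr0_implies_Suc by blast
  define y where "y i = (if i \<le> n then x $ i / wallis_ratio i else 0)" for i
  have x_eq: "x $ i = wallis_ratio i * y i" if "i \<le> n" for i
    using that wallis_ratio_pos[of i] by (simp add: y_def)
  have "x \<bullet> (Dmat m *\<^sub>v x)
      = (\<Sum>i\<le>n. Dmat_diag i * (x $ i)^2) + 2 * (\<Sum>i<n. Dmat_offdiag i * x $ i * x $ Suc i)"
    using x unfolding m Dmat_eq_sym_tridiag_mat by (rule quadratic_form_sym_tridiag_mat)
  also have "\<dots> = (\<Sum>i\<le>n. Dmat_diag i * (wallis_ratio i * y i)^2)
      + 2 * (\<Sum>i<n. Dmat_offdiag i * (wallis_ratio i * y i) * (wallis_ratio (Suc i) * y (Suc i)))"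
    by (simp add: x_eq del: wallis_ratio.simps)
  also have "\<dots> = (\<Sum>i<n. edge_weight i * (y i - y (Suc i))^2) + edge_weight n * (y n)^2"
    using Dmat_offdiag_wallis_ratio Dmat_diag_wallis_ratio_0 Dmat_diag_wallis_ratio_Suc
    by (rule ground_state_identity)
  also have "\<dots> = (\<Sum>i<m. edge_weight i * (y i - y (Suc i))^2)"
    by (simp add: m y_def)
  finally have form: "x \<bullet> (Dmat m *\<^sub>v x) = (\<Sum>i<m. edge_weight i * (y i - y (Suc i))^2)" .
  have "x \<bullet> x = (\<Sum>i<m. (wallis_ratio i * y i)^2)"
    using x
    by (simp add: m scalar_prod_def lessThan_atLeast0 x_eq power2_eq_square del: wallis_ratio.simps)
  also have "\<dots> \<le> (\<Sum>j<m. (\<Sum>i\<le>j. (wallis_ratio i)^2) / edge_weight j)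
      * (\<Sum>j<m. edge_weight j * (y j - y (Suc j))^2)"
    by (rule discrete_Hardy_inequality) (simp_all add: edge_weight_pos m y_def)
  finally show ?thesis
    unfolding form hardy_coeff_def .
qed

theorem proposition4p3:
  fixes m :: nat
  assumes "m \<ge> 2"
  shows "lambda_min (Dmat m) > 4 / ((ln (real m))^2 + 8 * ln (real m) + 8)"
proof -
  let ?S = "\<Sum>j<m. hardy_coeff j"
  have "?S > 0"
    using assms hardy_coeff_pos by (intro sum_pos) (auto simp: lessThan_empty_iff)
  have "1 / ?S \<le> lambda_min (Dmat m)"
  proof (rule lambda_min_ge_Rayleigh)
    show "Dmat m \<in> carrier_mat m m" "transpose_mat (Dmat m) = Dmat m" "m > 0"
      using assms by (simp_all add: Dmat_eq_sym_tridiag_mat transpose_sym_tridiag_mat)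
    show "1 / ?S * (x \<bullet> x) \<le> x \<bullet> (Dmat m *\<^sub>v x)" if "x \<in> carrier_vec m" for x
      using Dmat_Rayleigh_bound[OF that] assms \<open>?S > 0\<close> by (simp add: divide_simps mult.commute)
  qed
  moreover have "4 / ((ln (real m))^2 + 8 * ln (real m) + 8) < 1 / ?S"
    using sum_hardy_coeff_less[OF assms] \<open>?S > 0\<close> by (simp add: divide_simps)
  ultimately show ?thesis
    by linarith
qed

end
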